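(* Let $K$ be a finite field, let $L$ be the quadratic extension of $K$, and let $d$ be an integer with $\gcd(d,|L|-1)=1$ that is degenerate over $K$. Then $W_{L,d}(a)\ge 0$ for all $a\in K$.
   Context: Let $p$ be the characteristic. $\psi_L(x)=\exp(2\pi i\,\mathrm{Tr}_{L/\mathbb{F}_p}(x)/p)$ and $W_{L,d}(a)=\sum_{x\in L}\psi_L(x^d+ax)$. $d$ is degenerate over $K$ if $d\equiv p^j\pmod{|K|-1}$ for some integer $j$. *)

theory Defs
  imports "HOL-Analysis.Analysis" "HOL-Number_Theory.Cong"
begin

text \<open>The field L is modelled as a finite field type 'a; p = CHAR('a).
  ext_degree: the n with |L| = p^n.\<close>

definition ext_degree :: "'a::{field,finite} itself \<Rightarrow> nat" where
  "ext_degree _ = (THE n. CARD('a) = CHAR('a) ^ n)"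

definition abs_trace :: "'a::{field,finite} \<Rightarrow> 'a" where
  "abs_trace x = (\<Sum>i<ext_degree TYPE('a). x ^ (CHAR('a) ^ i))"

text \<open>Representative in {0..p-1} of the trace (an element of the prime field F_p).\<close>
definition trace_nat :: "'a::{field,finite} \<Rightarrow> nat" where
  "trace_nat x = (LEAST t. (of_nat t :: 'a) = abs_trace x)"

definition psi :: "'a::{field,finite} \<Rightarrow> complex" where
  "psi x = exp (2 * pi * \<i> * of_nat (trace_nat x) / of_nat CHAR('a))"

definition weil_sum :: "nat \<Rightarrow> 'a::{field,finite} \<Rightarrow> complex" where
  "weil_sum d a = (\<Sum>x\<in>(UNIV::'a set). psi (x ^ d + a * x))"

definition is_subfield :: "'a::field set \<Rightarrow> bool" where
  "is_subfield K \<longleftrightarrow> 0 \<in> K \<and> 1 \<in> K \<and>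
     (\<forall>x\<in>K. \<forall>y\<in>K. x + y \<in> K \<and> x * y \<in> K) \<and>
     (\<forall>x\<in>K. - x \<in> K \<and> inverse x \<in> K)"

definition degenerate_over :: "nat \<Rightarrow> 'a::{field,finite} set \<Rightarrow> bool" where
  "degenerate_over d K \<longleftrightarrow> (\<exists>j::nat. [d = CHAR('a) ^ j] (mod (card K - 1)))"

end

theory Submission
  imports Defs "HOL-Computational_Algebra.Polynomial" "HOL-Computational_Algebra.Primes"
begin

text \<open>Raising to a power of the characteristic permutes \<open>L\<close> and \<open>K\<close> and leaves \<open>psi\<close>
  invariant, so a degenerate exponent may be replaced by one with \<open>d \<equiv> 1 (mod q - 1)\<close>, where
  \<open>q = card K\<close>. Then \<open>f x = x ^ d + b x\<close> (\<open>b \<in> K\<close>) is \<open>K\<close>-homogeneous, and summing the \<open>K\<close>-character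
  sums \<open>S s = (\<Sum>c\<in>K. psi (c s)) \<in> {0, q}\<close> over the values of \<open>f\<close> gives
  \<open>(q - 1) W = q \<cdot> #{x. S (f x) \<noteq> 0} - q\<^sup>2\<close>. The \<open>q\<close> elements with \<open>z ^ q = - z\<close> span a
  \<open>K\<close>-line on which the trace vanishes, and \<open>f\<close> maps each of them to a \<open>K\<close>-multiple of itself,
  so \<open>S (f z) = q\<close> there and \<open>W \<ge> 0\<close>.\<close>

section \<open>Frobenius in a finite field\<close>

lemma CHAR_finite_pos [simp]: "CHAR('a::{field,finite}) > 0"
  by (rule finite_imp_CHAR_pos) simp

lemmas CHAR_finite_nonzero [simp] = CHAR_finite_pos[THEN gr_implies_not0]

lemma prime_CHAR_finite: "prime CHAR('a::{field,finite})"
  by (rule prime_CHAR_semidom[OF CHAR_finite_pos])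

lemma frobenius_add:
  "((x::'a::{field,finite}) + y) ^ (CHAR('a) ^ k) = x ^ (CHAR('a) ^ k) + y ^ (CHAR('a) ^ k)"
  by (rule freshmans_dream') (simp_all add: prime_CHAR_finite)

lemma frobenius_minus: "(- (x::'a::{field,finite})) ^ (CHAR('a) ^ k) = - (x ^ (CHAR('a) ^ k))"
proof (induction k)
  case (Suc k)
  then show ?case
    by (simp add: power_mult mult.commute[of "CHAR('a)"] minus_power_prime_CHAR prime_CHAR_finite)
qed simp

lemma frobenius_diff:
  "((x::'a::{field,finite}) - y) ^ (CHAR('a) ^ k) = x ^ (CHAR('a) ^ k) - y ^ (CHAR('a) ^ k)"
  using frobenius_add[of x "- y" k] by (simp add: frobenius_minus)

lemma frobenius_inj: "inj (\<lambda>x::'a::{field,finite}. x ^ (CHAR('a) ^ k))"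
proof (rule injI)
  fix x y :: 'a
  assume "x ^ (CHAR('a) ^ k) = y ^ (CHAR('a) ^ k)"
  then have "(x - y) ^ (CHAR('a) ^ k) = 0" by (simp add: frobenius_diff)
  then show "x = y" by simp
qed

lemma subfield_power_card:
  fixes S :: "'a::field set"
  assumes "is_subfield S" "finite S" "x \<in> S"
  shows "x ^ card S = x"
proof (cases "x = 0")
  case True
  then show ?thesis using assms(2,3) card_gt_0_iff by force
next
  case False
  have mult: "x * y \<in> S - {0}" if "y \<in> S - {0}" for y
    using assms(1,3) that False unfolding is_subfield_def by auto
  have "(\<Prod>y\<in>S - {0}. x * y) = (\<Prod>y\<in>S - {0}. y)"
    by (rule prod.reindex_bij_witness[of _ "\<lambda>y. y / x" "\<lambda>y. x * y"])
       (use False mult assms(1,3) in \<open>auto simp: is_subfield_def divide_inverse mult.commute\<close>)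
  then have "x ^ card (S - {0}) = 1"
    using assms(2) by (simp add: prod.distrib)
  moreover have "card S = Suc (card (S - {0}))"
    using assms(1,2) card_Suc_Diff1[of S 0] unfolding is_subfield_def by simp
  ultimately show ?thesis by simp
qed

lemma is_subfield_UNIV: "is_subfield UNIV"
  by (simp add: is_subfield_def)

lemma power_CARD: "(x::'a::{field,finite}) ^ CARD('a) = x"
  by (rule subfield_power_card) (simp_all add: is_subfield_UNIV)

lemma mem_if_power_card_eq_self:
  fixes S :: "'a::field set"
  assumes "finite S" "card S \<ge> 2" "\<And>y. y \<in> S \<Longrightarrow> y ^ card S = y" "x ^ card S = x"
  shows "x \<in> S"
proof (rule ccontr)
  assume "x \<notin> S"
  define P :: "'a poly" where "P = monom 1 (card S) + [:0, -1:]"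
  have "degree P = card S"
    unfolding P_def using assms(2) by (subst degree_add_eq_left) (auto simp: degree_monom_eq)
  then have "P \<noteq> 0" using assms(2) by auto
  have "insert x S \<subseteq> {y. poly P y = 0}"
    using assms(3,4) by (auto simp: P_def poly_monom)
  then have "card (insert x S) \<le> card {y. poly P y = 0}"
    using \<open>P \<noteq> 0\<close> poly_roots_finite by (blast intro: card_mono)
  also have "\<dots> \<le> card S"
    using card_poly_roots_bound[OF \<open>P \<noteq> 0\<close>] \<open>degree P = card S\<close> by simp
  finally show False using \<open>x \<notin> S\<close> assms(1) by simp
qed

section \<open>The order of a finite field\<close>

definition prime_subfield :: "'a::semiring_1 set" where
  "prime_subfield = range of_nat"

lemma finite_mult_closed_inverse:
  fixes S :: "'a::field set"
  assumes "finite S" "1 \<in> S" "\<And>x y. x \<in> S \<Longrightarrow> y \<in> S \<Longrightarrow> x * y \<in> S" "x \<in> S" "x \<noteq> 0"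
  shows "inverse x \<in> S"
proof -
  have "(\<lambda>y. x * y) ` S = S"
    using assms by (intro endo_inj_surj) (auto intro: inj_onI)
  then obtain y where "y \<in> S" "x * y = 1"
    using assms(2) by (metis imageE)
  then show ?thesis using assms(5) by (metis inverse_unique)
qed

lemma is_subfield_prime_subfield: "is_subfield (prime_subfield :: 'a::{field,finite} set)"
proof -
  let ?F = "prime_subfield :: 'a set"
  have zero: "0 \<in> ?F"
    unfolding prime_subfield_def by (metis of_nat_0 rangeI)
  have one: "1 \<in> ?F"
    unfolding prime_subfield_def by (metis of_nat_1 rangeI)
  have add: "x + y \<in> ?F" and mult: "x * y \<in> ?F" if "x \<in> ?F" "y \<in> ?F" for x y
    using that unfolding prime_subfield_def by (auto simp flip: of_nat_add of_nat_mult)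
  have minus_of_nat: "- of_nat n = (of_nat (n * (CHAR('a) - 1)) :: 'a)" for n
  proof (rule minus_unique)
    have "n + n * (CHAR('a) - 1) = n * CHAR('a)"
      using CHAR_finite_pos[where 'a='a] by (cases "CHAR('a)") simp_all
    then show "of_nat n + of_nat (n * (CHAR('a) - 1)) = (0 :: 'a)"
      by (metis of_nat_add of_nat_mult of_nat_CHAR mult_zero_right)
  qed
  have minus: "- x \<in> ?F" if "x \<in> ?F" for x
    using that minus_of_nat unfolding prime_subfield_def by (metis rangeE rangeI)
  have inverse: "inverse x \<in> ?F" if "x \<in> ?F" for x
  proof (cases "x = 0")
    case False
    show ?thesis by (rule finite_mult_closed_inverse[OF _ one mult that False]) simp
  qed (simp add: zero)
  show ?thesis
    unfolding is_subfield_def by (simp add: zero one add mult minus inverse)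
qed

lemma card_prime_subfield: "card (prime_subfield :: 'a::{field,finite} set) = CHAR('a)"
proof -
  have "(prime_subfield :: 'a set) = of_nat ` {..<CHAR('a)}"
  proof (intro equalityI subsetI)
    fix e :: 'a assume "e \<in> prime_subfield"
    then obtain n where "e = of_nat n" unfolding prime_subfield_def by auto
    moreover have "(of_nat n :: 'a) = of_nat (n mod CHAR('a))"
      by (simp add: of_nat_eq_iff_cong_CHAR cong_def)
    moreover have "n mod CHAR('a) < CHAR('a)" by simp
    ultimately show "e \<in> of_nat ` {..<CHAR('a)}" by blast
  qed (auto simp: prime_subfield_def)
  moreover have "inj_on (of_nat :: nat \<Rightarrow> 'a) {..<CHAR('a)}"
    by (auto intro!: inj_onI simp: of_nat_eq_iff_cong_CHAR cong_def)
  ultimately show ?thesis by (metis card_image card_lessThan)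
qed

definition prime_subspace :: "'a::{field,finite} set \<Rightarrow> bool" where
  "prime_subspace H \<longleftrightarrow>
     0 \<in> H \<and> (\<forall>x\<in>H. \<forall>y\<in>H. x + y \<in> H) \<and> (\<forall>c\<in>prime_subfield. \<forall>x\<in>H. c * x \<in> H)"

lemma prime_subspace_adjoin:
  fixes H :: "'a::{field,finite} set"
  assumes H: "prime_subspace H" and x: "x \<notin> H"
  defines "H' \<equiv> (\<lambda>(c, h). c * x + h) ` (prime_subfield \<times> H)"
  shows "prime_subspace H'" "card H' = CHAR('a) * card H"
proof -
  have F: "is_subfield (prime_subfield :: 'a set)" by (rule is_subfield_prime_subfield)
  have "inj_on (\<lambda>(c, h). c * x + h) (prime_subfield \<times> H)"
  proof (rule inj_onI, clarify)
    fix c h c' h'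
    assume c: "c \<in> prime_subfield" "c' \<in> prime_subfield" and h: "h \<in> H" "h' \<in> H"
      and eq: "c * x + h = c' * x + h'"
    show "c = c' \<and> h = h'"
    proof (rule ccontr)
      assume "\<not> (c = c' \<and> h = h')"
      then have "c - c' \<noteq> 0" using eq by auto
      have "c + - c' \<in> prime_subfield" "(-1 :: 'a) \<in> prime_subfield"
        using F c unfolding is_subfield_def by blast+
      then have "inverse (c - c') \<in> prime_subfield" "(-1 :: 'a) \<in> prime_subfield"
        using F unfolding is_subfield_def by auto
      then have "inverse (c - c') * (h' + (-1) * h) \<in> H"
        using H h c unfolding prime_subspace_def by blast
      moreover have "inverse (c - c') * (h' + (-1) * h) = x"
        using eq \<open>c - c' \<noteq> 0\<close> by (simp add: field_simps)
      ultimately show False using x by simp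
    qed
  qed
  then show "card H' = CHAR('a) * card H"
    unfolding H'_def by (simp add: card_image card_cartesian_product card_prime_subfield)
  have F_add: "c + c' \<in> prime_subfield" and F_mult: "c * c' \<in> prime_subfield"
    if "c \<in> prime_subfield" "c' \<in> prime_subfield" for c c' :: 'a
    using F that unfolding is_subfield_def by blast+
  have H_add: "h + h' \<in> H" if "h \<in> H" "h' \<in> H" for h h'
    using H that unfolding prime_subspace_def by blast
  have H_smult: "c * h \<in> H" if "c \<in> prime_subfield" "h \<in> H" for c h
    using H that unfolding prime_subspace_def by blast
  have "(0, 0) \<in> (prime_subfield :: 'a set) \<times> H"
    using F H unfolding is_subfield_def prime_subspace_def by simp
  then have "0 \<in> H'"
    unfolding H'_def by (rule rev_image_eqI) simp
  moreover have "u + v \<in> H'" if u: "u \<in> H'" and v: "v \<in> H'" for u v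
  proof -
    obtain c h c' h' where "c \<in> prime_subfield" "h \<in> H" "c' \<in> prime_subfield" "h' \<in> H"
      and "u = c * x + h" "v = c' * x + h'" using u v unfolding H'_def by fast
    then show ?thesis
      unfolding H'_def
      by (intro rev_image_eqI[of "(c + c', h + h')"]) (simp_all add: F_add H_add algebra_simps)
  qed
  moreover have "e * u \<in> H'" if e: "e \<in> prime_subfield" and u: "u \<in> H'" for e u
  proof -
    obtain c h where "c \<in> prime_subfield" "h \<in> H" "u = c * x + h"
      using u unfolding H'_def by fast
    then show ?thesis
      unfolding H'_def using e
      by (intro rev_image_eqI[of "(e * c, e * h)"]) (simp_all add: F_mult H_smult algebra_simps)
  qed
  ultimately show "prime_subspace H'" unfolding prime_subspace_def by blast
qed

lemma exists_prime_subspace_card_ge: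
  assumes "N \<le> CARD('a::{field,finite})"
  shows "\<exists>(H::'a set) k. prime_subspace H \<and> card H = CHAR('a) ^ k \<and> N \<le> card H"
  using assms
proof (induction N)
  case 0
  have "prime_subspace {0::'a}" by (simp add: prime_subspace_def)
  then show ?case by (intro exI[of _ "{0}"] exI[of _ 0]) simp
next
  case (Suc N)
  then obtain H :: "'a set" and k
    where H: "prime_subspace H" "card H = CHAR('a) ^ k" "N \<le> card H" by auto
  show ?case
  proof (cases "Suc N \<le> card H")
    case True
    then show ?thesis using H by blast
  next
    case False
    then have "H \<noteq> UNIV" using Suc.prems by auto
    then obtain x where "x \<notin> H" by blast
    note H' = prime_subspace_adjoin[OF H(1) this]
    have "card H \<ge> 1"
      using H(1) unfolding prime_subspace_def by (auto simp: Suc_le_eq card_gt_0_iff)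
    moreover have "CHAR('a) \<ge> 2" by (rule prime_ge_2_nat[OF prime_CHAR_finite])
    ultimately have "Suc N \<le> CHAR('a) * card H"
      using H(3) mult_le_mono1[of 2 "CHAR('a)" "card H"] by linarith
    then show ?thesis
      using H' H(2)
      by (intro exI[of _ "(\<lambda>(c, h). c * x + h) ` (prime_subfield \<times> H)"] exI[of _ "Suc k"]) simp
  qed
qed

lemma CARD_eq_CHAR_power_ext_degree: "CARD('a::{field,finite}) = CHAR('a) ^ ext_degree TYPE('a)"
proof -
  obtain H :: "'a set" and n where "card H = CHAR('a) ^ n" "CARD('a) \<le> card H"
    using exists_prime_subspace_card_ge[of "CARD('a)", where 'a='a] by auto
  moreover have "card H \<le> CARD('a)" by (rule card_mono) auto
  ultimately have n: "CARD('a) = CHAR('a) ^ n" by simp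
  have "ext_degree TYPE('a) = n"
    unfolding ext_degree_def
  proof (rule the_equality)
    show "CARD('a) = CHAR('a) ^ n" by (rule n)
  qed (use n prime_gt_1_nat[OF prime_CHAR_finite[where 'a='a]] in simp)
  then show ?thesis using n by simp
qed

section \<open>The absolute trace and the canonical additive character\<close>

lemma frobenius_ext_degree: "(x::'a::{field,finite}) ^ (CHAR('a) ^ ext_degree TYPE('a)) = x"
  using power_CARD[of x] by (simp flip: CARD_eq_CHAR_power_ext_degree)

lemma abs_trace_add: "abs_trace ((x::'a::{field,finite}) + y) = abs_trace x + abs_trace y"
  unfolding abs_trace_def by (simp add: frobenius_add sum.distrib)

lemma abs_trace_power_CHAR: "abs_trace (x::'a::{field,finite}) ^ CHAR('a) = abs_trace x"
proof -
  let ?p = "CHAR('a)" and ?n = "ext_degree TYPE('a)"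
  have "abs_trace x ^ ?p = (\<Sum>i<?n. x ^ (?p ^ Suc i))"
    unfolding abs_trace_def
    using freshmans_dream_sum'[OF prime_CHAR_finite, of ?p 1 "\<lambda>i. x ^ (?p ^ i)" "{..<?n}"]
    by (simp add: power_mult[symmetric] mult.commute)
  also have "\<dots> = (\<Sum>i<Suc ?n. x ^ (?p ^ i)) - x"
    by (subst sum.lessThan_Suc_shift) simp
  also have "\<dots> = abs_trace x"
    by (simp add: abs_trace_def frobenius_ext_degree)
  finally show ?thesis .
qed

lemma abs_trace_frobenius: "abs_trace ((x::'a::{field,finite}) ^ CHAR('a)) = abs_trace x"
proof -
  have "abs_trace (x ^ CHAR('a)) = abs_trace x ^ CHAR('a)"
    unfolding abs_trace_def
    using freshmans_dream_sum'[OF prime_CHAR_finite, of "CHAR('a)" 1 "\<lambda>i. x ^ (CHAR('a) ^ i)"]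
    by (simp add: power_mult[symmetric] mult.commute)
  then show ?thesis by (simp add: abs_trace_power_CHAR)
qed

lemma abs_trace_in_prime_subfield: "abs_trace (x::'a::{field,finite}) \<in> prime_subfield"
proof (rule mem_if_power_card_eq_self)
  show "card (prime_subfield :: 'a set) \<ge> 2"
    by (simp add: card_prime_subfield prime_ge_2_nat[OF prime_CHAR_finite])
  show "y ^ card (prime_subfield :: 'a set) = y" if "y \<in> (prime_subfield :: 'a set)" for y
    by (rule subfield_power_card[OF is_subfield_prime_subfield _ that]) simp
qed (simp_all add: card_prime_subfield abs_trace_power_CHAR)

lemma of_nat_trace_nat: "(of_nat (trace_nat x) :: 'a::{field,finite}) = abs_trace x"
proof -
  obtain t where "(of_nat t :: 'a) = abs_trace x"
    using abs_trace_in_prime_subfield[of x] unfolding prime_subfield_def by auto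
  then show ?thesis unfolding trace_nat_def by (rule LeastI)
qed

lemma exp_two_pi_i_cong:
  fixes p :: nat
  assumes "p > 0" "[m = m'] (mod p)"
  shows "exp (2 * pi * \<i> * of_nat m / of_nat p) = exp (2 * pi * \<i> * of_nat m' / of_nat p)"
proof -
  obtain k :: int where k: "int m - int m' = int p * k"
    using assms(2) by (metis cong_int_iff cong_iff_dvd_diff dvdE)
  have "2 * pi * \<i> * of_nat m / of_nat p = 2 * pi * \<i> * of_nat m' / of_nat p + of_int (2 * k) * pi * \<i>"
  proof -
    have "(of_nat m :: complex) = of_nat m' + of_nat p * of_int k"
      using arg_cong[OF k, of "of_int :: int \<Rightarrow> complex"] by (simp add: diff_eq_eq add_ac)
    then show ?thesis using assms(1) by (simp add: field_simps)
  qed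
  then show ?thesis by (auto simp: exp_eq)
qed

lemma psi_add: "psi ((x::'a::{field,finite}) + y) = psi x * psi y"
proof -
  have "[trace_nat (x + y) = trace_nat x + trace_nat y] (mod CHAR('a))"
    by (simp flip: of_nat_eq_iff_cong_CHAR add: of_nat_trace_nat abs_trace_add)
  then have "psi (x + y) = exp (2 * pi * \<i> * of_nat (trace_nat x + trace_nat y) / of_nat CHAR('a))"
    unfolding psi_def by (rule exp_two_pi_i_cong[OF CHAR_finite_pos])
  also have "\<dots> = psi x * psi y"
    unfolding psi_def by (simp add: exp_add[symmetric] add_divide_distrib distrib_left)
  finally show ?thesis .
qed

lemma psi_eq_1_if_abs_trace_eq_0: "abs_trace (x::'a::{field,finite}) = 0 \<Longrightarrow> psi x = 1"
proof -
  assume "abs_trace x = 0"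
  then have "trace_nat x = 0" unfolding trace_nat_def by (intro Least_equality) auto
  then show ?thesis unfolding psi_def by simp
qed

lemma psi_zero [simp]: "psi (0::'a::{field,finite}) = 1"
  by (rule psi_eq_1_if_abs_trace_eq_0)
     (simp add: abs_trace_def power_0_left)

lemma psi_frobenius: "psi ((x::'a::{field,finite}) ^ (CHAR('a) ^ k)) = psi x"
proof (induction k)
  case (Suc k)
  have "x ^ (CHAR('a) ^ Suc k) = (x ^ (CHAR('a) ^ k)) ^ CHAR('a)"
    by (simp add: power_mult[symmetric] mult.commute)
  then show ?case using Suc unfolding psi_def trace_nat_def by (simp add: abs_trace_frobenius)
qed simp

lemma weil_sum_frobenius:
  "weil_sum (d * CHAR('a) ^ k) b = weil_sum d ((b::'a::{field,finite}) ^ (CHAR('a) ^ k))"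
proof -
  let ?P = "CHAR('a) ^ k"
  have "weil_sum d (b ^ ?P) = (\<Sum>x\<in>UNIV. psi ((x ^ ?P) ^ d + b ^ ?P * x ^ ?P))"
    unfolding weil_sum_def
    by (rule sum.reindex_bij_betw[symmetric])
       (simp add: bij_betw_def frobenius_inj finite_UNIV_inj_surj)
  also have "\<dots> = (\<Sum>x\<in>UNIV. psi (x ^ (d * ?P) + b * x))"
  proof (rule sum.cong[OF refl])
    fix x :: 'a
    have "(x ^ ?P) ^ d + b ^ ?P * x ^ ?P = x ^ (d * ?P) + (b * x) ^ ?P"
      by (simp add: power_mult[symmetric] mult.commute power_mult_distrib)
    then show "psi ((x ^ ?P) ^ d + b ^ ?P * x ^ ?P) = psi (x ^ (d * ?P) + b * x)"
      by (simp add: psi_add psi_frobenius)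
  qed
  also have "\<dots> = weil_sum (d * ?P) b"
    unfolding weil_sum_def ..
  finally show ?thesis ..
qed

section \<open>Character sums over a subfield\<close>

definition subfield_char_sum :: "'a::{field,finite} set \<Rightarrow> 'a \<Rightarrow> complex" where
  "subfield_char_sum K s = (\<Sum>c\<in>K. psi (c * s))"

lemma subfield_char_sum_eq_card:
  "(\<And>c. c \<in> K \<Longrightarrow> psi (c * s) = 1) \<Longrightarrow> subfield_char_sum K s = of_nat (card K)"
  unfolding subfield_char_sum_def by simp

lemma subfield_char_sum_eq_0:
  assumes K: "is_subfield K" and c0: "c0 \<in> K" "psi (c0 * s) \<noteq> 1"
  shows "subfield_char_sum K s = 0"
proof -
  have shift: "c + c0 \<in> K" "c - c0 \<in> K" if "c \<in> K" for c
  proof -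
    have "- c0 \<in> K" using K c0(1) unfolding is_subfield_def by blast
    then show "c + c0 \<in> K" "c - c0 \<in> K"
      using K c0(1) that unfolding is_subfield_def diff_conv_add_uminus by blast+
  qed
  have "subfield_char_sum K s = (\<Sum>c\<in>K. psi ((c + c0) * s))"
    unfolding subfield_char_sum_def
    by (rule sum.reindex_bij_witness[of _ "\<lambda>c. c + c0" "\<lambda>c. c - c0"]) (auto simp: shift)
  also have "\<dots> = subfield_char_sum K s * psi (c0 * s)"
    unfolding subfield_char_sum_def by (simp add: distrib_right psi_add sum_distrib_right)
  finally have "subfield_char_sum K s * (1 - psi (c0 * s)) = 0"
    by (simp add: algebra_simps)
  then show ?thesis using c0(2) by simp
qed

lemma subfield_char_sum_cases:
  "is_subfield K \<Longrightarrow> subfield_char_sum K s \<in> {0, of_nat (card K)}"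
  using subfield_char_sum_eq_0 subfield_char_sum_eq_card by blast

lemma sum_subfield_char_sum:
  fixes g :: "'b::finite \<Rightarrow> 'a::{field,finite}"
  assumes "is_subfield K"
  shows "(\<Sum>x\<in>UNIV. subfield_char_sum K (g x)) =
    of_nat (card K * card {x. subfield_char_sum K (g x) \<noteq> 0})"
proof -
  let ?A = "{x. subfield_char_sum K (g x) \<noteq> 0}"
  have "(\<Sum>x\<in>UNIV. subfield_char_sum K (g x)) = (\<Sum>x\<in>?A. subfield_char_sum K (g x))"
    by (rule sum.mono_neutral_right) auto
  also have "\<dots> = (\<Sum>x\<in>?A. of_nat (card K))"
    using subfield_char_sum_cases[OF assms] by (intro sum.cong) auto
  finally show ?thesis by simp
qed

lemma homogeneous_char_sum:
  fixes f :: "'a::{field,finite} \<Rightarrow> 'a"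
  assumes K: "is_subfield K" and f: "\<And>c x. c \<in> K \<Longrightarrow> f (c * x) = c * f x"
  shows "(\<Sum>x\<in>UNIV. subfield_char_sum K (f x)) =
    of_nat CARD('a) + of_nat (card K - 1) * (\<Sum>x\<in>UNIV. psi (f x))"
proof -
  have "0 \<in> K" using K unfolding is_subfield_def by blast
  have scale: "(\<Sum>x\<in>UNIV. psi (c * f x)) = (\<Sum>x\<in>UNIV. psi (f x))" if "c \<in> K - {0}" for c
  proof -
    have "(\<Sum>x\<in>UNIV. psi (c * f x)) = (\<Sum>x\<in>UNIV. psi (f (c * x)))"
      using that by (simp add: f)
    also have "\<dots> = (\<Sum>x\<in>UNIV. psi (f x))"
      using that by (intro sum.reindex_bij_witness[of _ "\<lambda>x. x / c" "\<lambda>x. c * x"]) auto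
    finally show ?thesis .
  qed
  have "(\<Sum>x\<in>UNIV. subfield_char_sum K (f x)) = (\<Sum>c\<in>K. \<Sum>x\<in>UNIV. psi (c * f x))"
    unfolding subfield_char_sum_def by (rule sum.swap)
  also have "\<dots> = (\<Sum>x\<in>UNIV. psi (0 * f x)) + (\<Sum>c\<in>K - {0}. \<Sum>x\<in>UNIV. psi (c * f x))"
    using \<open>0 \<in> K\<close> by (simp add: sum.remove)
  also have "\<dots> = of_nat CARD('a) + (\<Sum>c\<in>K - {0}. \<Sum>x\<in>UNIV. psi (f x))"
    by (simp add: scale)
  also have "\<dots> = of_nat CARD('a) + of_nat (card K - 1) * (\<Sum>x\<in>UNIV. psi (f x))"
    using \<open>0 \<in> K\<close> by simp
  finally show ?thesis .
qed

lemma power_mult_add_one_if_power_Suc: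
  fixes x u :: "'a::comm_ring_1"
  assumes "x ^ Suc r = u * x"
  shows "x ^ (t * r + 1) = u ^ t * x"
proof (induction t)
  case (Suc t)
  have "x ^ (Suc t * r + 1) = x ^ r * x ^ (t * r + 1)"
    by (simp flip: power_add add: algebra_simps)
  also have "\<dots> = u ^ t * x ^ Suc r"
    using Suc by (simp add: algebra_simps)
  also have "\<dots> = u ^ t * (u * x)"
    by (simp only: assms)
  also have "\<dots> = u ^ Suc t * x"
    by (simp add: mult_ac)
  finally show ?case .
qed simp

lemma sum_lessThan_add: "(\<Sum>i<m + n. f i) = (\<Sum>i<m. f i) + (\<Sum>i<n. f (m + i))" for n :: nat
  by (induction n) (simp_all add: add.assoc)

section \<open>The quadratic extension\<close>

locale quadratic_subfield =
  fixes K :: "'a::{field,finite} set"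
  assumes subfield: "is_subfield K" and CARD_eq_card_square: "CARD('a) = card K ^ 2"
begin

lemma zero_mem: "0 \<in> K" and one_mem: "1 \<in> K"
  and add_mem: "x \<in> K \<Longrightarrow> y \<in> K \<Longrightarrow> x + y \<in> K"
  and mult_mem: "x \<in> K \<Longrightarrow> y \<in> K \<Longrightarrow> x * y \<in> K"
  and uminus_mem: "x \<in> K \<Longrightarrow> - x \<in> K"
  using subfield unfolding is_subfield_def by auto

lemma power_mem: "x \<in> K \<Longrightarrow> x ^ n \<in> K"
  by (induction n) (simp_all add: one_mem mult_mem)

lemma card_ge_2: "card K \<ge> 2"
proof -
  have "{0, 1} \<subseteq> K" using zero_mem one_mem by blast
  then have "card {0::'a, 1} \<le> card K" by (rule card_mono[OF finite])
  then show ?thesis by simp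
qed

lemma power_card: "c \<in> K \<Longrightarrow> c ^ card K = c"
  by (rule subfield_power_card[OF subfield finite])

lemma power_card_power: "c \<in> K \<Longrightarrow> c ^ (card K ^ j) = c"
  by (induction j) (simp_all add: power_mult power_card)

lemma card_eq_CHAR_power: "\<exists>m. card K = CHAR('a) ^ m \<and> ext_degree TYPE('a) = 2 * m \<and> m \<ge> 1"
proof -
  have "card K dvd CHAR('a) ^ ext_degree TYPE('a)"
    using CARD_eq_card_square by (simp flip: CARD_eq_CHAR_power_ext_degree)
  then obtain m where m: "card K = CHAR('a) ^ m"
    using divides_primepow_nat[OF prime_CHAR_finite] by blast
  then have "CHAR('a) ^ ext_degree TYPE('a) = CHAR('a) ^ (2 * m)"
    using CARD_eq_card_square by (simp flip: CARD_eq_CHAR_power_ext_degree add: power_mult mult.commute)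
  then have "ext_degree TYPE('a) = 2 * m"
    using prime_gt_1_nat[OF prime_CHAR_finite[where 'a='a]] by simp
  moreover have "m \<ge> 1" using card_ge_2 m by (cases m) auto
  ultimately show ?thesis using m by blast
qed

lemma frobenius_surj_subfield:
  assumes "a \<in> K"
  obtains b where "b \<in> K" "b ^ (CHAR('a) ^ k) = a"
proof -
  obtain m where m: "card K = CHAR('a) ^ m" "m \<ge> 1" using card_eq_CHAR_power by blast
  define b where "b = a ^ (CHAR('a) ^ ((m - 1) * k))"
  have "b \<in> K"
    unfolding b_def using assms by (rule power_mem)
  moreover have "b ^ (CHAR('a) ^ k) = a ^ (card K ^ k)"
    using m by (simp add: b_def m(1) flip: power_mult power_add) (simp add: algebra_simps power_mult)
  ultimately show ?thesis using that power_card_power[OF assms] by simp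
qed

text \<open>Conjugation \<open>y \<mapsto> y ^ card K\<close> pairs the terms \<open>y ^ p ^ i\<close> and \<open>y ^ p ^ (m + i)\<close> of
  the absolute trace, so the trace vanishes on the eigenspace of conjugation for \<open>-1\<close>.\<close>
lemma abs_trace_eq_0_if_power_card_eq_uminus:
  fixes y :: 'a
  assumes y: "y ^ card K = - y"
  shows "abs_trace y = 0"
proof -
  obtain m where m: "card K = CHAR('a) ^ m" "ext_degree TYPE('a) = 2 * m"
    using card_eq_CHAR_power by blast
  have "y ^ (CHAR('a) ^ (m + i)) = - (y ^ (CHAR('a) ^ i))" for i
  proof -
    have "y ^ (CHAR('a) ^ (m + i)) = (y ^ card K) ^ (CHAR('a) ^ i)"
      by (simp add: m(1) power_add power_mult)
    also have "\<dots> = - (y ^ (CHAR('a) ^ i))"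
      unfolding y by (rule frobenius_minus)
    finally show ?thesis .
  qed
  then show ?thesis
    unfolding abs_trace_def m(2) mult_2 sum_lessThan_add by (simp add: sum_negf)
qed

lemma exists_power_card_eq_uminus: "\<exists>z::'a. z \<noteq> 0 \<and> z ^ card K = - z"
proof -
  obtain m where m: "card K = CHAR('a) ^ m" using card_eq_CHAR_power by blast
  have "card K < CARD('a)"
    using card_ge_2 CARD_eq_card_square by (simp add: power2_eq_square)
  then obtain y :: 'a where "y \<notin> K" by (metis UNIV_I card_mono finite subsetI leD)
  define z where "z = y - y ^ card K"
  have "(y ^ card K) ^ card K = y"
    using power_CARD[of y] CARD_eq_card_square by (simp flip: power_mult add: power2_eq_square)
  then have "z ^ card K = - z"
    unfolding z_def m frobenius_diff by (simp flip: m)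
  moreover have "z \<noteq> 0"
    using \<open>y \<notin> K\<close> mem_if_power_card_eq_self[OF finite card_ge_2 power_card] unfolding z_def by auto
  ultimately show ?thesis by blast
qed

lemma card_power_card_eq_uminus: "card K \<le> card {z::'a. z ^ card K = - z}"
proof -
  obtain z0 :: 'a where z0: "z0 \<noteq> 0" "z0 ^ card K = - z0"
    using exists_power_card_eq_uminus by blast
  have "inj_on (\<lambda>c. c * z0) K" using z0(1) by (intro inj_onI) simp
  then have "card K = card ((\<lambda>c. c * z0) ` K)" by (simp add: card_image)
  also have "\<dots> \<le> card {z::'a. z ^ card K = - z}"
    using z0(2) power_card by (intro card_mono) (auto simp: power_mult_distrib)
  finally show ?thesis .
qed

lemma subfield_char_sum_if_power_card_eq_uminus:
  assumes "z ^ card K = - z" "e \<in> K"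
  shows "subfield_char_sum K (e * z) = of_nat (card K)"
proof (rule subfield_char_sum_eq_card)
  fix c assume "c \<in> K"
  then have "(c * e) ^ card K = c * e" using assms(2) by (simp add: mult_mem power_card)
  then have "(c * e * z) ^ card K = - (c * e * z)"
    using assms(1) by (simp only: power_mult_distrib[of "c * e" z]) simp
  then show "psi (c * (e * z)) = 1"
    by (simp add: mult.assoc psi_eq_1_if_abs_trace_eq_0 abs_trace_eq_0_if_power_card_eq_uminus)
qed

lemma weil_sum_nonneg_if_exponent_cong_1:
  assumes b: "b \<in> K" and d: "d = t * (card K - 1) + 1"
  shows "weil_sum d b \<in> \<real> \<and> 0 \<le> Re (weil_sum d b)"
proof -
  define q where "q = card K"
  have Suc_q: "Suc (q - 1) = q" and q1: "q - 1 \<noteq> 0"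
    using card_ge_2 unfolding q_def by auto
  have d': "d = t * (q - 1) + 1" unfolding d q_def ..
  define f where "f x = x ^ d + b * x" for x :: 'a
  define A where "A = {x. subfield_char_sum K (f x) \<noteq> 0}"
  have "c ^ d = c" if "c \<in> K" for c
  proof -
    have "c ^ Suc (q - 1) = 1 * c"
      unfolding Suc_q mult_1_left unfolding q_def by (rule power_card[OF that])
    then show ?thesis using power_mult_add_one_if_power_Suc[of c "q - 1" 1 t] unfolding d' by simp
  qed
  then have homogeneous: "f (c * x) = c * f x" if "c \<in> K" for c x
    using that unfolding f_def by (simp add: power_mult_distrib algebra_simps)
  have "of_nat (q * card A) = (\<Sum>x\<in>UNIV. subfield_char_sum K (f x))"
    using sum_subfield_char_sum[OF subfield, of f] unfolding A_def q_def by simp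
  also have "\<dots> = of_nat CARD('a) + of_nat (q - 1) * (\<Sum>x\<in>UNIV. psi (f x))"
    unfolding q_def by (rule homogeneous_char_sum[OF subfield homogeneous])
  also have "\<dots> = of_nat (q * q) + of_nat (q - 1) * weil_sum d b"
    unfolding weil_sum_def f_def q_def by (simp add: CARD_eq_card_square power2_eq_square)
  finally have count: "of_nat (q * card A) = of_nat (q * q) + of_nat (q - 1) * weil_sum d b" .
  have "q \<le> card A"
  proof -
    have "f z = ((-1) ^ t + b) * z" if "z ^ q = - z" for z
    proof -
      have "z ^ Suc (q - 1) = - 1 * z" unfolding Suc_q using that by simp
      then show ?thesis using power_mult_add_one_if_power_Suc[of z "q - 1" "-1" t]
        unfolding f_def d' by (simp add: algebra_simps)
    qed
    moreover have "(-1) ^ t + b \<in> K"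
      using b by (simp add: add_mem power_mem uminus_mem one_mem)
    ultimately have "{z. z ^ q = - z} \<subseteq> A"
      using subfield_char_sum_if_power_card_eq_uminus card_ge_2 unfolding A_def q_def by auto
    then show ?thesis
      using card_power_card_eq_uminus unfolding q_def by (meson card_mono finite le_trans)
  qed
  then obtain r where "card A = q + r" using le_Suc_ex by blast
  with count have "of_nat (q * q) + of_nat (q * r) = of_nat (q * q) + of_nat (q - 1) * weil_sum d b"
    by (simp only: distrib_left of_nat_add)
  then have "of_nat (q * r) = weil_sum d b * of_nat (q - 1)"
    by (simp only: add_left_cancel mult.commute)
  from divide_eq_imp[OF _ this] have "of_real (real (q * r) / real (q - 1)) = weil_sum d b"
    using q1 by simp
  then show ?thesis by (metis Reals_of_real Re_complex_of_real divide_nonneg_nonneg of_nat_0_le_iff)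
qed

lemma degenerate_exponent_frobenius_twist:
  assumes "degenerate_over d K" "d \<noteq> 0"
  obtains k t where "d * CHAR('a) ^ k = t * (card K - 1) + 1"
proof -
  obtain j where j: "[d = CHAR('a) ^ j] (mod (card K - 1))"
    using assms(1) unfolding degenerate_over_def by blast
  obtain m where m: "card K = CHAR('a) ^ m" "m \<ge> 1" using card_eq_CHAR_power by blast
  define k where "k = (m - 1) * j"
  have "[d * CHAR('a) ^ k = card K ^ j] (mod (card K - 1))"
    using cong_mult[OF j cong_refl, of "CHAR('a) ^ k"] m
    by (simp add: k_def flip: power_add power_mult) (simp add: algebra_simps)
  also have "[card K ^ j = 1 ^ j] (mod (card K - 1))"
    using card_ge_2 by (intro cong_pow) (auto simp: cong_le_nat intro: exI[of _ 1])
  finally have "[d * CHAR('a) ^ k = 1] (mod (card K - 1))" by simp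
  moreover have "1 \<le> d * CHAR('a) ^ k" using assms(2) by (simp add: Suc_le_eq)
  ultimately show ?thesis using that cong_le_nat by blast
qed

end

theorem corollary4p5:
  fixes K :: "'a::{field,finite} set" and d :: nat and a :: 'a
  assumes "is_subfield K"
    and "CARD('a) = card K ^ 2"
    and "coprime d (CARD('a) - 1)"
    and "degenerate_over d K"
    and "a \<in> K"
  shows "weil_sum d a \<in> \<real> \<and> 0 \<le> Re (weil_sum d a)"
proof -
  interpret quadratic_subfield K using assms(1,2) by unfold_locales
  have "d \<noteq> 0"
  proof
    assume "d = 0"
    then have "card K * card K - 1 = 1" using assms(2,3) by (simp add: power2_eq_square)
    then show False using mult_le_mono[OF card_ge_2 card_ge_2] by simp
  qed
  then obtain k t where kt: "d * CHAR('a) ^ k = t * (card K - 1) + 1"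
    using degenerate_exponent_frobenius_twist[OF assms(4)] by blast
  obtain b where b: "b \<in> K" "b ^ (CHAR('a) ^ k) = a"
    using frobenius_surj_subfield[OF assms(5)] by blast
  have "weil_sum d a = weil_sum (t * (card K - 1) + 1) b"
    using weil_sum_frobenius[of d k b] b(2) kt by simp
  then show ?thesis using weil_sum_nonneg_if_exponent_cong_1[OF b(1) refl] by simp
qed

end
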